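(* Let $\xi$ be an $(I,T)$-system with the stuttering property, let $P(S)$ be a property, and let $n\ge 0$. Then there is no bad state that is reachable in $n+1$ transitions but not reachable in any number $k\le n$ of transitions if and only if $I(S_1)$ is redundant in $$\exists S_0\cdots\exists S_n\,[\,I(S_0)\wedge I(S_1)\wedge T_{0,1}\wedge\dots\wedge T_{n,n+1}\wedge \neg P(S_{n+1})\,],$$ i.e. if and only if this formula is equivalent, as a Boolean function of $S_{n+1}$, to $\exists S_0\cdots\exists S_n\,[\,I(S_0)\wedge T_{0,1}\wedge\dots\wedge T_{n,n+1}\wedge \neg P(S_{n+1})\,]$.
   Context: An $(I,T)$-system is a transition system over a finite set $S$ of Boolean state variables, given by a propositional formula $I(S)$ (initial states) and a propositional formula $T(S,S')$ (transition relation), where $S'$ is a copy of $S$. A state is a complete assignment to $S$. A trace $(s_0,\dots,s_k)$ is valid if $I(s_0)=1$ and $T(s_i,s_{i+1})=1$ for $i=0,\dots,k-1$; then $s_k$ is reachable in $k$ transitions. The system has the stuttering property if $T(s,s)=1$ for every state $s$. A property is a propositional formula $P(S)$; a state $s$ is bad if $P(s)=0$ and good if $P(s)=1$. Notation: $S_j$ is a copy of the state variables for time frame $j$; $T_{j,j+1}$ denotes $T(S_j,S_{j+1})$; $I(S_0)$, $I(S_1)$ are copies of $I$ over $S_0$, $S_1$; $P(S_{n+1})$ is a copy of $P$ over $S_{n+1}$. A conjunct $A$ is redundant in $\exists W[A\wedge B]$ if $\exists W[A\wedge B]\equiv\exists W[B]$, where $\equiv$ means equality as Boolean functions of the free variables.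 *)

theory Defs
  imports Main
begin

(* A state is a complete assignment to the finite set of Boolean state variables 'v.
   Propositional formulas over S (resp. S,S') are represented by the Boolean
   functions they denote. *)
type_synonym 'v state = "'v \<Rightarrow> bool"

definition stuttering :: "('v state \<Rightarrow> 'v state \<Rightarrow> bool) \<Rightarrow> bool" where
  "stuttering T \<longleftrightarrow> (\<forall>s. T s s)"

definition reachable_in ::
  "('v state \<Rightarrow> bool) \<Rightarrow> ('v state \<Rightarrow> 'v state \<Rightarrow> bool) \<Rightarrow> nat \<Rightarrow> 'v state \<Rightarrow> bool" where
  "reachable_in I T k s \<longleftrightarrow>
     (\<exists>tr :: nat \<Rightarrow> 'v state. I (tr 0) \<and> (\<forall>i<k. T (tr i) (tr (Suc i))) \<and> tr k = s)"

definition bmc_formula ::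
  "('v state \<Rightarrow> bool) \<Rightarrow> ('v state \<Rightarrow> 'v state \<Rightarrow> bool) \<Rightarrow> ('v state \<Rightarrow> bool) \<Rightarrow> nat \<Rightarrow> 'v state \<Rightarrow> bool" where
  "bmc_formula I T P n = (\<lambda>x. \<exists>tr :: nat \<Rightarrow> 'v state. tr (Suc n) = x \<and>
      I (tr 0) \<and> (\<forall>i<Suc n. T (tr i) (tr (Suc i))) \<and> \<not> P (tr (Suc n)))"

definition bmc_formula_I1 ::
  "('v state \<Rightarrow> bool) \<Rightarrow> ('v state \<Rightarrow> 'v state \<Rightarrow> bool) \<Rightarrow> ('v state \<Rightarrow> bool) \<Rightarrow> nat \<Rightarrow> 'v state \<Rightarrow> bool" where
  "bmc_formula_I1 I T P n = (\<lambda>x. \<exists>tr :: nat \<Rightarrow> 'v state. tr (Suc n) = x \<and>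
      I (tr 0) \<and> I (tr 1) \<and> (\<forall>i<Suc n. T (tr i) (tr (Suc i))) \<and> \<not> P (tr (Suc n)))"

end

theory Submission
  imports Defs
begin

text \<open>Under stuttering a trace can be padded by repeating a state, so reachability in \<open>k\<close>
  transitions is monotone in \<open>k\<close>, and "reachable in \<open>n+1\<close> but in no \<open>k \<le> n\<close>" just means
  "reachable in \<open>n+1\<close> but not in \<open>n\<close>". The first formula describes the bad states reachable in
  \<open>n+1\<close> transitions. With \<open>I(S\<^sub>1)\<close> added it describes the bad states reachable in \<open>n\<close>
  transitions: frames \<open>1,\<dots>,n+1\<close> form such a trace, and conversely a stuttering step can be
  prepended to one. The two formulas agree exactly when no bad state needs the extra step.\<close>

lemma reachable_in_Suc:
  assumes "stuttering T" and "reachable_in I T k s"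
  shows "reachable_in I T (Suc k) s"
proof -
  from assms(2) obtain tr where tr: "I (tr 0)" "\<forall>i<k. T (tr i) (tr (Suc i))" "tr k = s"
    unfolding reachable_in_def by blast
  let ?tr = "tr(Suc k := tr k)"
  have "\<forall>i<Suc k. T (?tr i) (?tr (Suc i))"
    using tr assms(1) unfolding stuttering_def by (auto simp: less_Suc_eq)
  with tr show ?thesis
    unfolding reachable_in_def by (intro exI[of _ ?tr]) auto
qed

lemma reachable_in_mono:
  assumes "stuttering T" and "k \<le> n" and "reachable_in I T k s"
  shows "reachable_in I T n s"
  using assms(2,3) by (induction n rule: dec_induct) (auto intro: reachable_in_Suc[OF assms(1)])

lemma bmc_formula_iff: "bmc_formula I T P n s \<longleftrightarrow> \<not> P s \<and> reachable_in I T (Suc n) s"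
  unfolding bmc_formula_def reachable_in_def by blast

lemma bmc_formula_I1_imp:
  assumes "bmc_formula_I1 I T P n s"
  shows "\<not> P s \<and> reachable_in I T n s"
proof -
  from assms obtain tr where tr: "tr (Suc n) = s" "I (tr 1)"
      "\<forall>i<Suc n. T (tr i) (tr (Suc i))" "\<not> P (tr (Suc n))"
    unfolding bmc_formula_I1_def by blast
  then have "reachable_in I T n s"
    unfolding reachable_in_def by (intro exI[of _ "\<lambda>i. tr (Suc i)"]) auto
  with tr show ?thesis by simp
qed

lemma bmc_formula_I1_iff:
  assumes "stuttering T"
  shows "bmc_formula_I1 I T P n s \<longleftrightarrow> \<not> P s \<and> reachable_in I T n s"
proof
  assume "\<not> P s \<and> reachable_in I T n s"
  then obtain tr where tr: "\<not> P s" "I (tr 0)" "\<forall>i<n. T (tr i) (tr (Suc i))" "tr n = s"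
    unfolding reachable_in_def by blast
  let ?tr = "\<lambda>i. tr (i - 1)"
  have "\<forall>i<Suc n. T (?tr i) (?tr (Suc i))"
  proof (intro allI impI)
    fix i assume "i < Suc n"
    with tr assms show "T (?tr i) (?tr (Suc i))"
      unfolding stuttering_def by (cases i) auto
  qed
  with tr show "bmc_formula_I1 I T P n s"
    unfolding bmc_formula_I1_def by (intro exI[of _ ?tr]) auto
qed (rule bmc_formula_I1_imp)

theorem proposition2:
  fixes I :: "('v::finite) state \<Rightarrow> bool"
    and T :: "'v state \<Rightarrow> 'v state \<Rightarrow> bool"
    and P :: "'v state \<Rightarrow> bool"
    and n :: nat
  assumes "stuttering T"
  shows "(\<not> (\<exists>s. \<not> P s \<and> reachable_in I T (Suc n) s \<and> (\<forall>k\<le>n. \<not> reachable_in I T k s)))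
         \<longleftrightarrow> bmc_formula_I1 I T P n = bmc_formula I T P n"
proof -
  have unreachable_upto_n: "(\<forall>k\<le>n. \<not> reachable_in I T k s) \<longleftrightarrow> \<not> reachable_in I T n s" for s
    using reachable_in_mono[OF assms] by blast
  have "bmc_formula_I1 I T P n = bmc_formula I T P n \<longleftrightarrow>
        (\<forall>s. (\<not> P s \<and> reachable_in I T n s) = (\<not> P s \<and> reachable_in I T (Suc n) s))"
    unfolding fun_eq_iff bmc_formula_iff bmc_formula_I1_iff[OF assms] by simp
  also have "\<dots> \<longleftrightarrow> \<not> (\<exists>s. \<not> P s \<and> reachable_in I T (Suc n) s \<and> \<not> reachable_in I T n s)"
    using reachable_in_Suc[OF assms] by blast
  finally show ?thesis
    using unreachable_upto_n by simp
qed

end
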